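(* Let $q$ be a positive multiple of $24$, let $w_A,w_B:\mathbb{Z}/q\mathbb{Z}\to[0,1]$, and let $a,b:\mathbb{Z}/24\mathbb{Z}\to[0,1]$ be $a(k):=\frac{24}{q}\sum_{x\equiv k\ (\mathrm{mod}\ 24)}w_A(x)$, $b(k):=\frac{24}{q}\sum_{x\equiv k\ (\mathrm{mod}\ 24)}w_B(x)$ (sums over $x\in\mathbb{Z}/q\mathbb{Z}$). Then $$\Bigg|\sum_{\substack{m\in\mathbb{Z}/q\mathbb{Z}\\ q\nmid 24m}}\widehat{w_A}(m)\widehat{w_B}(m)\widehat{f_q}(-m)\Bigg|\le\frac1{24\sqrt5}\sqrt{\sum_{k\in\mathbb{Z}/24\mathbb{Z}}\big(a(k)-a(k)^2\big)}\sqrt{\sum_{k\in\mathbb{Z}/24\mathbb{Z}}\big(b(k)-b(k)^2\big)}.$$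
   Context: $e(\theta):=e^{2\pi i\theta}$. For $f:\mathbb{Z}/q\mathbb{Z}\to\mathbb{C}$, $\widehat f(r):=\frac1q\sum_{x\in\mathbb{Z}/q\mathbb{Z}}f(x)e(-rx/q)$, and $f_q(t):=\#\{x\in\mathbb{Z}/q\mathbb{Z}:x^2=t\}$. *)

theory Defs
  imports "HOL-Analysis.Analysis"
begin

text \<open>Z/qZ is represented by the residues {0..<q}; functions on Z/qZ are functions
  on nat of which only the values on {0..<q} matter.\<close>

definition e :: "real \<Rightarrow> complex" where
  "e \<theta> = cis (2 * pi * \<theta>)"

definition fhat :: "nat \<Rightarrow> (nat \<Rightarrow> real) \<Rightarrow> int \<Rightarrow> complex" where
  "fhat q f r = (1 / of_nat q) * (\<Sum>x<q. of_real (f x) * e (- (of_int r * of_nat x) / of_nat q))"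

definition fq :: "nat \<Rightarrow> nat \<Rightarrow> real" where
  "fq q t = real (card {x. x < q \<and> x^2 mod q = t mod q})"

definition avg24 :: "nat \<Rightarrow> (nat \<Rightarrow> real) \<Rightarrow> nat \<Rightarrow> real" where
  "avg24 q w k = (24 / real q) * (\<Sum>x\<in>{x. x < q \<and> x mod 24 = k mod 24}. w x)"

end

theory Submission
  imports Defs "HOL-Library.Real_Mod"
begin

text \<open>
  Parseval's identity splits the energy of \<open>\<widehat>w\<close> into the frequencies \<open>m\<close> with \<open>q | 24m\<close>,
  which are multiples of \<open>q/24\<close> and carry exactly \<open>\<Sum>\<^sub>k a(k)\<^sup>2/24\<close>, and the remaining ones;
  since \<open>0 \<le> w \<le> 1\<close> the total energy is at most \<open>\<Sum>\<^sub>k a(k)/24\<close>, so the remaining frequencies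
  carry at most \<open>\<Sum>\<^sub>k (a(k) - a(k)\<^sup>2)/24\<close>.
  On these frequencies \<open>\<widehat>f\<^sub>q(-m)\<close> is a normalised quadratic Gauss sum; squaring and shifting
  bounds its square by \<open>#{h. q | 2mh}/q\<close>, and this annihilator is a subgroup of \<open>\<int>/q\<int>\<close> without
  nonzero elements below 5, so it has at most \<open>q/5\<close> elements. Cauchy--Schwarz combines the two bounds.
\<close>

definition e_mod :: "nat \<Rightarrow> int \<Rightarrow> complex" where
  "e_mod N k = e (of_int k / of_nat N)"

lemma e_mod_add: "e_mod N (a + b) = e_mod N a * e_mod N b"
  by (simp add: e_mod_def e_def cis_mult add_divide_distrib algebra_simps)

lemma e_mod_cnj: "cnj (e_mod N k) = e_mod N (- k)"
  by (simp add: e_mod_def e_def cis_cnj)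

lemma norm_e_mod [simp]: "norm (e_mod N k) = 1"
  by (simp add: e_mod_def e_def)

lemma e_mod_mult_self: "N > 0 \<Longrightarrow> e_mod N (int N * k) = 1"
  by (simp add: e_mod_def e_def)

lemma e_mod_power: "e_mod N (int j * t) = e_mod N t ^ j"
proof (induction j)
  case 0
  then show ?case by (simp add: e_mod_def e_def)
next
  case (Suc j)
  have "int (Suc j) * t = t + int j * t" by (simp add: algebra_simps)
  then show ?case using Suc.IH by (simp only: e_mod_add power_Suc)
qed

lemma e_mod_cong:
  assumes "N > 0" "a mod int N = b mod int N"
  shows "e_mod N a = e_mod N b"
proof -
  have "e_mod N k = e_mod N (k mod int N)" for k
    using e_mod_add[of N "k mod int N" "int N * (k div int N)"] e_mod_mult_self[OF assms(1)]
    by simp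
  then show ?thesis using assms(2) by metis
qed

lemma e_mod_eq_1_iff:
  assumes "N > 0"
  shows "e_mod N t = 1 \<longleftrightarrow> int N dvd t"
proof
  assume "e_mod N t = 1"
  then obtain n where "2 * pi * (of_int t / of_nat N) = of_int n * (2 * pi)"
    unfolding e_mod_def e_def cis_eq_1_iff by blast
  then have "of_int t = (of_int (n * int N) :: real)"
    using assms by (simp add: field_simps)
  then have "t = n * int N" by (simp only: of_int_eq_iff)
  then show "int N dvd t" by simp
qed (use assms e_mod_mult_self in auto)

lemma sum_e_mod_mult:
  assumes "N > 0"
  shows "(\<Sum>j<N. e_mod N (int j * t)) = (if int N dvd t then of_nat N else 0)"
proof (cases "int N dvd t")
  case True
  then obtain c where "t = int N * c" by blast
  then have "e_mod N (int j * t) = 1" for j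
    using e_mod_mult_self[OF assms, of "int j * c"] by (simp add: mult.left_commute)
  with True show ?thesis by simp
next
  case False
  have "e_mod N t ^ N = 1"
    using e_mod_power[of N N t] e_mod_mult_self[OF assms, of t] by simp
  with False show ?thesis
    using e_mod_eq_1_iff[OF assms] by (simp add: e_mod_power geometric_sum)
qed

lemma fhat_e_mod: "fhat N f r = (1 / of_nat N) * (\<Sum>x<N. of_real (f x) * e_mod N (- (r * int x)))"
  unfolding fhat_def e_mod_def by simp

subsection \<open>Parseval's identity\<close>

lemma int_dvd_diff_less_iff:
  fixes x y N :: nat
  assumes "x < N" "y < N"
  shows "int N dvd int y - int x \<longleftrightarrow> x = y"
proof
  assume "int N dvd int y - int x"
  then obtain c where c: "int y - int x = int N * c" by blast
  show "x = y"
  proof (rule ccontr)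
    assume "x \<noteq> y"
    with c have "c \<noteq> 0" by auto
    then have "1 \<le> \<bar>c\<bar>" by linarith
    then have "int N \<le> \<bar>int N * c\<bar>" by (simp add: abs_mult mult_le_cancel_left1)
    with c assms show False by linarith
  qed
qed simp

lemma sum_norm_dft_sq:
  fixes f :: "nat \<Rightarrow> complex"
  assumes "N > 0"
  shows "(\<Sum>j<N. (norm (\<Sum>x<N. f x * e_mod N (- (int j * int x))))\<^sup>2)
       = real N * (\<Sum>x<N. (norm (f x))\<^sup>2)"
proof -
  define F where "F j = (\<Sum>x<N. f x * e_mod N (- (int j * int x)))" for j
  have phase: "e_mod N (- (int j * int x)) * cnj (e_mod N (- (int j * int y)))
      = e_mod N (int j * (int y - int x))" for j x y
    unfolding e_mod_cnj e_mod_add[symmetric] by (simp add: algebra_simps)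
  have "complex_of_real (\<Sum>j<N. (norm (F j))\<^sup>2) = (\<Sum>j<N. F j * cnj (F j))"
    by (simp only: of_real_sum complex_norm_square)
  also have "\<dots> = (\<Sum>j<N. \<Sum>x<N. \<Sum>y<N. f x * cnj (f y) * e_mod N (int j * (int y - int x)))"
    unfolding F_def cnj_sum sum_product
    by (intro sum.cong refl) (simp add: phase[symmetric] mult_ac)
  also have "\<dots> = (\<Sum>x<N. \<Sum>j<N. \<Sum>y<N. f x * cnj (f y) * e_mod N (int j * (int y - int x)))"
    by (rule sum.swap)
  also have "\<dots> = (\<Sum>x<N. \<Sum>y<N. f x * cnj (f y) * (\<Sum>j<N. e_mod N (int j * (int y - int x))))"
    unfolding sum_distrib_left by (rule sum.cong[OF refl], rule sum.swap)
  also have "\<dots> = (\<Sum>x<N. \<Sum>y<N. if y = x then of_nat N * (f x * cnj (f y)) else 0)"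
    by (intro sum.cong refl) (auto simp: sum_e_mod_mult[OF assms] int_dvd_diff_less_iff)
  also have "\<dots> = complex_of_real (real N * (\<Sum>x<N. (norm (f x))\<^sup>2))"
    by (simp add: sum_distrib_left flip: complex_norm_square)
  finally show ?thesis
    unfolding F_def of_real_eq_iff .
qed

lemma fhat_parseval:
  assumes "N > 0"
  shows "(\<Sum>j<N. (norm (fhat N f (int j)))\<^sup>2) = (\<Sum>x<N. (f x)\<^sup>2) / real N"
proof -
  have "norm (fhat N f (int j)) = norm (\<Sum>x<N. of_real (f x) * e_mod N (- (int j * int x))) / real N"
    for j by (simp add: fhat_e_mod norm_mult norm_divide)
  then have "(\<Sum>j<N. (norm (fhat N f (int j)))\<^sup>2)
      = (\<Sum>j<N. (norm (\<Sum>x<N. of_real (f x) * e_mod N (- (int j * int x))))\<^sup>2) / (real N)\<^sup>2"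
    by (simp add: power_divide sum_divide_distrib)
  also have "\<dots> = real N * (\<Sum>x<N. (f x)\<^sup>2) / (real N)\<^sup>2"
    using sum_norm_dft_sq[OF assms, of "\<lambda>x. of_real (f x)"] by simp
  also have "\<dots> = (\<Sum>x<N. (f x)\<^sup>2) / real N"
    using assms by (simp add: power2_eq_square)
  finally show ?thesis .
qed

definition class_average :: "nat \<Rightarrow> nat \<Rightarrow> (nat \<Rightarrow> real) \<Rightarrow> nat \<Rightarrow> real" where
  "class_average n q w k = (real n / real q) * (\<Sum>x\<in>{x. x < q \<and> x mod n = k mod n}. w x)"

lemma avg24_eq_class_average: "avg24 q = class_average 24 q"
  by (simp add: fun_eq_iff avg24_def class_average_def)

lemma sum_over_residue_classes:
  fixes n q :: nat
  assumes "n > 0"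
  shows "(\<Sum>k<n. \<Sum>x\<in>{x. x < q \<and> x mod n = k}. g x) = (\<Sum>x<q. g x)"
proof -
  have "(\<Sum>k\<in>{..<n}. \<Sum>x\<in>{x\<in>{..<q}. x mod n = k}. g x) = (\<Sum>x\<in>{..<q}. g x)"
    using assms by (intro sum.group) auto
  then show ?thesis by (simp add: lessThan_def)
qed

lemma sum_class_average:
  assumes "n > 0"
  shows "(\<Sum>k<n. class_average n q w k) = (real n / real q) * (\<Sum>x<q. w x)"
proof -
  have "(\<Sum>k<n. class_average n q w k)
      = (real n / real q) * (\<Sum>k<n. \<Sum>x\<in>{x. x < q \<and> x mod n = k}. w x)"
    unfolding class_average_def sum_distrib_left by (intro sum.cong refl) simp
  then show ?thesis by (simp only: sum_over_residue_classes[OF assms])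
qed

lemma fhat_class_average:
  assumes "q = n * c" "q > 0"
  shows "fhat q w (int (j * c)) = fhat n (class_average n q w) (int j)"
proof -
  have n: "n > 0" using assms by (cases n) auto
  have phase: "e_mod q (- (int (j * c) * int x)) = e_mod n (- (int j * int (x mod n)))" for x
  proof -
    have "e_mod q (- (int (j * c) * int x)) = e_mod n (- (int j * int x))"
      unfolding e_mod_def using assms by (simp add: field_simps)
    also have "\<dots> = e_mod n (- (int j * int (x mod n)))"
      by (rule e_mod_cong[OF n]) (simp add: zmod_int, metis mod_minus_eq mod_mult_right_eq)
    finally show ?thesis .
  qed
  have "fhat q w (int (j * c))
      = (1 / of_nat q) * (\<Sum>k<n. \<Sum>x\<in>{x. x < q \<and> x mod n = k}.
           of_real (w x) * e_mod n (- (int j * int (x mod n))))"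
    unfolding fhat_e_mod phase sum_over_residue_classes[OF n] ..
  also have "\<dots> = (1 / of_nat q) * (\<Sum>k<n. of_real (\<Sum>x\<in>{x. x < q \<and> x mod n = k}. w x)
      * e_mod n (- (int j * int k)))"
    unfolding of_real_sum sum_distrib_right by (intro arg_cong2[where f = "(*)"] sum.cong refl) auto
  also have "\<dots> = (1 / of_nat n) * (\<Sum>k<n. of_real (class_average n q w k) * e_mod n (- (int j * int k)))"
    unfolding sum_distrib_left class_average_def
    by (intro sum.cong refl) (simp add: assms flip: sum_divide_distrib)
  also have "\<dots> = fhat n (class_average n q w) (int j)"
    unfolding fhat_e_mod ..
  finally show ?thesis .
qed

lemma coarse_frequencies_eq:
  fixes q n c :: nat
  assumes "q = n * c" "c > 0"
  shows "{m. m < q \<and> q dvd n * m} = (\<lambda>j. j * c) ` {..<n}"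
proof (intro set_eqI iffI)
  fix m assume m: "m \<in> {m. m < q \<and> q dvd n * m}"
  then have "n > 0" using assms by (auto intro: gr0I)
  with m assms obtain j where "m = c * j" by (auto elim!: dvdE)
  with m assms show "m \<in> (\<lambda>j. j * c) ` {..<n}" by (auto simp: mult.commute)
qed (use assms in auto)

lemma sum_norm_fhat_sq_fine_le:
  assumes "q > 0" "n dvd q" "\<And>x. x < q \<Longrightarrow> 0 \<le> w x \<and> w x \<le> 1"
  shows "(\<Sum>m\<in>{m. m < q \<and> \<not> q dvd n * m}. (norm (fhat q w (int m)))\<^sup>2)
     \<le> (\<Sum>k<n. class_average n q w k - (class_average n q w k)\<^sup>2) / real n"
proof -
  obtain c where qc: "q = n * c" using assms(2) by blast
  then have c: "c > 0" and n: "n > 0" using assms(1) by auto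
  define g where "g m = (norm (fhat q w (int m)))\<^sup>2" for m
  have "{..<q} = {m. m < q \<and> q dvd n * m} \<union> {m. m < q \<and> \<not> q dvd n * m}" by auto
  then have split: "(\<Sum>m<q. g m)
      = (\<Sum>m\<in>{m. m < q \<and> q dvd n * m}. g m) + (\<Sum>m\<in>{m. m < q \<and> \<not> q dvd n * m}. g m)"
    by (simp only:) (rule sum.union_disjoint, auto)
  have inj: "inj_on (\<lambda>j. j * c) {..<n}" using c by (auto simp: inj_on_def)
  have coarse: "(\<Sum>m\<in>{m. m < q \<and> q dvd n * m}. g m) = (\<Sum>k<n. (class_average n q w k)\<^sup>2) / real n"
    unfolding coarse_frequencies_eq[OF qc c] g_def sum.reindex[OF inj] o_def
      fhat_class_average[OF qc assms(1)] fhat_parseval[OF n] ..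
  have "(\<Sum>m<q. g m) = (\<Sum>x<q. (w x)\<^sup>2) / real q"
    unfolding g_def by (rule fhat_parseval[OF assms(1)])
  also have "\<dots> \<le> (\<Sum>x<q. w x) / real q"
    using assms(3) by (intro divide_right_mono sum_mono) (auto simp: power2_eq_square mult_left_le)
  also have "\<dots> = (\<Sum>k<n. class_average n q w k) / real n"
    using n by (simp add: sum_class_average)
  finally show ?thesis
    using split coarse unfolding g_def by (simp add: sum_subtractf diff_divide_distrib)
qed

subsection \<open>The Gauss sum bound\<close>

lemma fhat_fq_neg:
  assumes "q > 0"
  shows "fhat q (fq q) (- int m) = (1 / of_nat q) * (\<Sum>x<q. e_mod q (int m * int (x\<^sup>2)))"
proof -
  have "(\<Sum>t<q. of_real (fq q t) * e_mod q (- (- int m * int t)))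
      = (\<Sum>t<q. \<Sum>x\<in>{x\<in>{..<q}. x\<^sup>2 mod q = t}. e_mod q (int m * int (x\<^sup>2 mod q)))"
  proof (rule sum.cong[OF refl])
    fix t assume "t \<in> {..<q}"
    then have "{x. x < q \<and> x\<^sup>2 mod q = t mod q} = {x\<in>{..<q}. x\<^sup>2 mod q = t}" by auto
    then show "of_real (fq q t) * e_mod q (- (- int m * int t))
        = (\<Sum>x\<in>{x\<in>{..<q}. x\<^sup>2 mod q = t}. e_mod q (int m * int (x\<^sup>2 mod q)))"
      unfolding fq_def by simp
  qed
  also have "\<dots> = (\<Sum>x<q. e_mod q (int m * int (x\<^sup>2 mod q)))"
    by (rule sum.group) (use assms in auto)
  also have "\<dots> = (\<Sum>x<q. e_mod q (int m * int (x\<^sup>2)))"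
  proof (rule sum.cong[OF refl], rule e_mod_cong[OF assms])
    fix x
    show "int m * int (x\<^sup>2 mod q) mod int q = int m * int (x\<^sup>2) mod int q"
      by (simp add: zmod_int mod_mult_right_eq)
  qed
  finally show ?thesis unfolding fhat_e_mod by simp
qed

lemma bij_betw_add_mod:
  fixes q y :: nat
  assumes "q > 0"
  shows "bij_betw (\<lambda>h. (y + h) mod q) {..<q} {..<q}"
proof -
  have inj: "inj_on (\<lambda>h. (y + h) mod q) {..<q}"
  proof (rule inj_onI)
    fix a b assume ab: "a \<in> {..<q}" "b \<in> {..<q}" and "(y + a) mod q = (y + b) mod q"
    from this(3) have "a mod q = b mod q" by (simp add: nat_mod_eq_iff)
    with ab show "a = b" by simp
  qed
  have "(\<lambda>h. (y + h) mod q) ` {..<q} = {..<q}"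
    by (rule endo_inj_surj[OF _ _ inj]) (use assms in auto)
  with inj show ?thesis by (simp add: bij_betw_def)
qed

lemma norm_gauss_sum_sq_le:
  fixes q m :: nat
  assumes "q > 0"
  shows "(norm (\<Sum>x<q. e_mod q (int m * int (x\<^sup>2))))\<^sup>2
       \<le> real q * real (card {h\<in>{..<q}. q dvd 2 * m * h})"
proof -
  define S where "S = (\<Sum>x<q. e_mod q (int m * int (x\<^sup>2)))"
  have shift: "e_mod q (int m * int (((y + h) mod q)\<^sup>2)) * e_mod q (- (int m * int (y\<^sup>2)))
      = e_mod q (int m * int (h\<^sup>2)) * e_mod q (int y * int (2 * m * h))" for y h
  proof -
    have "e_mod q (int m * int (((y + h) mod q)\<^sup>2)) = e_mod q (int m * int ((y + h)\<^sup>2))"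
    proof (rule e_mod_cong[OF assms])
      have "int (((y + h) mod q)\<^sup>2) mod int q = int ((y + h)\<^sup>2) mod int q"
        by (simp add: zmod_int power_mod)
      then show "int m * int (((y + h) mod q)\<^sup>2) mod int q = int m * int ((y + h)\<^sup>2) mod int q"
        by (metis mod_mult_right_eq)
    qed
    moreover have "int m * int ((y + h)\<^sup>2) + - (int m * int (y\<^sup>2))
        = int m * int (h\<^sup>2) + int y * int (2 * m * h)"
      by (simp add: power2_eq_square algebra_simps)
    ultimately show ?thesis by (metis e_mod_add)
  qed
  \<comment> \<open>substituting \<open>x = y + h\<close> turns \<open>\<bar>S\<bar>\<^sup>2\<close> into a sum of phases that are linear in \<open>y\<close>\<close>
  have inner: "(\<Sum>x<q. e_mod q (int m * int (x\<^sup>2)) * e_mod q (- (int m * int (y\<^sup>2))))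
      = (\<Sum>h<q. e_mod q (int m * int (h\<^sup>2)) * e_mod q (int y * int (2 * m * h)))" for y
    using sum.reindex_bij_betw[OF bij_betw_add_mod[OF assms, of y],
        of "\<lambda>x. e_mod q (int m * int (x\<^sup>2)) * e_mod q (- (int m * int (y\<^sup>2)))"]
    by (simp only: shift)
  have "S * cnj S = (\<Sum>y<q. \<Sum>x<q. e_mod q (int m * int (x\<^sup>2)) * e_mod q (- (int m * int (y\<^sup>2))))"
    unfolding S_def cnj_sum e_mod_cnj sum_product by (rule sum.swap)
  also have "\<dots> = (\<Sum>y<q. \<Sum>h<q. e_mod q (int m * int (h\<^sup>2)) * e_mod q (int y * int (2 * m * h)))"
    by (simp only: inner)
  also have "\<dots> = (\<Sum>h<q. e_mod q (int m * int (h\<^sup>2)) * (if q dvd 2 * m * h then of_nat q else 0))"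
    unfolding sum_distrib_left[symmetric] sum.swap[of _ "{..<q}" "{..<q}"]
    by (simp only: sum_distrib_left[symmetric] sum_e_mod_mult[OF assms] of_nat_dvd_iff)
  finally have expand: "S * cnj S = \<dots>" .
  have "(norm S)\<^sup>2 = norm (S * cnj S)" by (simp add: norm_mult power2_eq_square)
  also have "\<dots> \<le> (\<Sum>h<q. if q dvd 2 * m * h then real q else 0)"
    unfolding expand by (rule order_trans[OF norm_sum], intro sum_mono) (auto simp: norm_mult)
  also have "\<dots> = real q * real (card {h\<in>{..<q}. q dvd 2 * m * h})"
    by (simp add: sum.If_cases Int_def)
  finally show ?thesis unfolding S_def .
qed

lemma card_annihilator_le:
  fixes q k d :: nat
  assumes "q > 0" "\<And>h. 0 < h \<Longrightarrow> h < d \<Longrightarrow> \<not> q dvd k * h"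
  shows "d * card {h\<in>{..<q}. q dvd k * h} \<le> q"
proof (cases "d = 0")
  case False
  define H where "H = {h\<in>{..<q}. q dvd k * h}"
  have diff_mem: "b - a \<in> H" if "a \<in> H" "b \<in> H" "a \<le> b" for a b
    using that dvd_diff_nat[of q "k * b" "k * a"] by (auto simp: H_def diff_mult_distrib2)
  have separated: "a + d \<le> b" if "a \<in> H" "b \<in> H" "a < b" for a b
    using assms(2)[of "b - a"] diff_mem[OF that(1,2)] that(3) by (force simp: H_def)
  \<comment> \<open>\<open>q - h\<close> is another nonzero element of the subgroup \<open>H\<close>\<close>
  have below: "h + d \<le> q" if "h \<in> H" for h
  proof -
    have "q - h \<in> {h. q dvd k * h}"
      using that dvd_diff_nat[of q "k * q" "k * h"] by (auto simp: H_def diff_mult_distrib2)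
    then show ?thesis using assms(2)[of "q - h"] that by (force simp: H_def)
  qed
  have div_less: "a div d < b div d" if "a + d \<le> b" for a b
    using div_le_mono[OF that, of d] False by simp
  have "inj_on (\<lambda>h. h div d) H"
  proof (rule inj_onI, rule ccontr)
    fix a b assume "a \<in> H" "b \<in> H" "a div d = b div d" "a \<noteq> b"
    then show False
      using separated[of a b] separated[of b a] div_less by (metis less_irrefl linorder_neqE_nat)
  qed
  moreover have "(\<lambda>h. h div d) ` H \<subseteq> {..<q div d}"
    using below div_less by auto
  ultimately have "card H \<le> q div d"
    using card_inj_on_le[of _ H "{..<q div d}"] by simp
  then have "d * card H \<le> d * (q div d)" by simp
  also have "\<dots> \<le> q" by (rule times_div_less_eq_dividend)
  finally show ?thesis unfolding H_def .
qed simp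

lemma norm_fhat_fq_le:
  fixes q m :: nat
  assumes "q > 0" "\<not> q dvd 24 * m"
  shows "norm (fhat q (fq q) (- int m)) \<le> 1 / sqrt 5"
proof -
  have "\<not> q dvd 2 * m * h" if "0 < h" "h < 5" for h
  proof
    assume "q dvd 2 * m * h"
    moreover have "h = 1 \<or> h = 2 \<or> h = 3 \<or> h = 4" using that by presburger
    then have "h dvd 12" by auto
    then have "2 * m * h dvd 24 * m" by (auto elim!: dvdE)
    ultimately show False using assms(2) dvd_trans by blast
  qed
  then have "5 * card {h\<in>{..<q}. q dvd 2 * m * h} \<le> q"
    by (rule card_annihilator_le[OF assms(1)])
  then have "(norm (\<Sum>x<q. e_mod q (int m * int (x\<^sup>2))))\<^sup>2 \<le> real q * (real q / 5)"
    by (intro order_trans[OF norm_gauss_sum_sq_le[OF assms(1)]] mult_left_mono) auto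
  then have "(norm (fhat q (fq q) (- int m)))\<^sup>2 \<le> 1 / 5"
    using assms(1) by (simp add: fhat_fq_neg norm_mult norm_divide power_divide power2_eq_square
        divide_le_eq)
  then have "norm (fhat q (fq q) (- int m)) \<le> sqrt (1 / 5)"
    by (rule real_le_rsqrt)
  then show ?thesis by (simp add: real_sqrt_divide)
qed

lemma norm_sum_mult_le:
  fixes a b c :: "'i \<Rightarrow> complex"
  assumes "\<And>m. m \<in> M \<Longrightarrow> norm (c m) \<le> C" "0 \<le> C"
  shows "norm (\<Sum>m\<in>M. a m * b m * c m)
       \<le> C * sqrt (\<Sum>m\<in>M. (norm (a m))\<^sup>2) * sqrt (\<Sum>m\<in>M. (norm (b m))\<^sup>2)"
proof -
  have "norm (\<Sum>m\<in>M. a m * b m * c m) \<le> (\<Sum>m\<in>M. C * (\<bar>norm (a m)\<bar> * \<bar>norm (b m)\<bar>))"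
  proof (rule order_trans[OF norm_sum], rule sum_mono)
    fix m assume "m \<in> M"
    have "norm (a m * b m * c m) = (norm (a m) * norm (b m)) * norm (c m)"
      by (simp add: norm_mult)
    also have "\<dots> \<le> (norm (a m) * norm (b m)) * C"
      using assms(1)[OF \<open>m \<in> M\<close>] by (intro mult_left_mono) auto
    finally show "norm (a m * b m * c m) \<le> C * (\<bar>norm (a m)\<bar> * \<bar>norm (b m)\<bar>)"
      by (simp add: mult.commute)
  qed
  also have "\<dots> \<le> C * (L2_set (\<lambda>m. norm (a m)) M * L2_set (\<lambda>m. norm (b m)) M)"
    unfolding sum_distrib_left[symmetric] using assms(2) by (intro mult_left_mono L2_set_mult_ineq)
  finally show ?thesis by (simp add: L2_set_def mult.assoc)
qed

theorem lemma3p5: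
  fixes q :: nat and wA wB :: "nat \<Rightarrow> real"
  assumes "q > 0" and "24 dvd q"
    and "\<And>x. x < q \<Longrightarrow> 0 \<le> wA x \<and> wA x \<le> 1"
    and "\<And>x. x < q \<Longrightarrow> 0 \<le> wB x \<and> wB x \<le> 1"
  shows "norm (\<Sum>m\<in>{m. m < q \<and> \<not> q dvd 24 * m}.
              fhat q wA (int m) * fhat q wB (int m) * fhat q (fq q) (- int m))
         \<le> 1 / (24 * sqrt 5)
            * sqrt (\<Sum>k<24. avg24 q wA k - (avg24 q wA k)^2)
            * sqrt (\<Sum>k<24. avg24 q wB k - (avg24 q wB k)^2)"
proof -
  let ?M = "{m. m < q \<and> \<not> q dvd 24 * m}"
  let ?SA = "\<Sum>k<24. avg24 q wA k - (avg24 q wA k)^2"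
  let ?SB = "\<Sum>k<24. avg24 q wB k - (avg24 q wB k)^2"
  have A: "(\<Sum>m\<in>?M. (norm (fhat q wA (int m)))\<^sup>2) \<le> ?SA / 24"
    using sum_norm_fhat_sq_fine_le[OF assms(1,2,3)] by (simp add: avg24_eq_class_average)
  have B: "(\<Sum>m\<in>?M. (norm (fhat q wB (int m)))\<^sup>2) \<le> ?SB / 24"
    using sum_norm_fhat_sq_fine_le[OF assms(1,2,4)] by (simp add: avg24_eq_class_average)
  have "norm (\<Sum>m\<in>?M. fhat q wA (int m) * fhat q wB (int m) * fhat q (fq q) (- int m))
      \<le> 1 / sqrt 5 * sqrt (\<Sum>m\<in>?M. (norm (fhat q wA (int m)))\<^sup>2)
                   * sqrt (\<Sum>m\<in>?M. (norm (fhat q wB (int m)))\<^sup>2)"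
    by (rule norm_sum_mult_le) (use norm_fhat_fq_le[OF assms(1)] in auto)
  also have "\<dots> \<le> 1 / sqrt 5 * sqrt (?SA / 24) * sqrt (?SB / 24)"
    by (intro mult_mono' mult_left_mono real_sqrt_le_mono A B) (auto simp: sum_nonneg)
  also have "\<dots> = 1 / (24 * sqrt 5) * sqrt ?SA * sqrt ?SB"
    by (simp add: real_sqrt_divide)
  finally show ?thesis .
qed

end
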